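(* Let $n\ge1$, let $f:\{0,1\}^n\to\{0,1\}^n$ be a Boolean model, and let $h$ be a multivalued refinement of $f$ on $X=\prod_{j=1}^n\{0,1,\dots,m_j\}$ built by the threshold construction described in the context. Let $J=\{j: m_j>1\}$ and suppose no component $g_j$ with $j\in J$ is self-inhibited. For a Boolean state $\omega$, let $\omega'\in X$ be obtained from $\omega$ by replacing, for each $j\in J$, the coordinate $\omega_j$ by $m_j$ whenever $\omega_j=1$. (1) If $\omega$ is a fixed point of $f$, then $\omega'$ is a fixed point of $h$; moreover every fixed point of $h$ is of the form $\omega'$ for some fixed point $\omega$ of $f$. (2) If the attractors of the asynchronous dynamics of $f$ are exactly $l$ fixed points $\omega^{(1)},\dots,\omega^{(l)}$, then $\omega'^{(1)},\dots,\omega'^{(l)}$ are the only attractors of the asynchronous dynamics of $h$.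
   Context: Asynchronous dynamics of a map $h:X\to X$ ($X=\prod_j\{0,\dots,m_j\}$, $h_j(x)-x_j\in\{-1,0,1\}$): a transition $x\to y$ exists if there is $i_0$ with $x_{i_0}\neq h_{i_0}(x)$, $y_{i_0}=x_{i_0}+\mathrm{sign}(h_{i_0}(x)-x_{i_0})$, $y_j=x_j$ otherwise. The attractors are the terminal strongly connected components of this state transition graph; a fixed point is a state $x$ with $h(x)=x$. For $x\in X$, $\alpha(x)=\{x'\in\{0,1\}^n:\forall j,\ (x_j=0\Rightarrow x'_j=0),(x_j=m_j\Rightarrow x'_j=1)\}$. A multivalued model $h$ is a refinement of $f$ if for all $x\in X$, $j$: $h_j(x)<x_j\Rightarrow\exists x'\in\alpha(x), f_j(x')<x'_j$ and $h_j(x)>x_j\Rightarrow\exists x'\in\alpha(x), f_j(x')>x'_j$. Threshold construction: write each $f_{j_0}$ in a shortest disjunctive normal form of literals $x_j$ or $\neg x_j$; for each literal whose variable $j$ has $m_j>1$, choose $s\in\{0,\dots,m_j-1\}$ and replace $x_j$ by $x_j\ge s+1$, $\neg x_j$ by $x_j<s+1$; set $\mathcal H_{j_0}(x)=+1$ if the resulting formula is true at $x\in X$ and $-1$ otherwise, and $h_j(x)=\max(0,\min(m_j,x_j+\mathcal H_j(x)))$. Component $g_j$ is self-inhibited if $\neg x_j$ occurs in the shortest DNF of $f_j$. *)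

theory Defs
  imports Main
begin

text \<open>Components are indexed by 0..n-1. A state is a function nat => nat that
  vanishes outside {0..<n}. The state space X = prod_j {0..m_j}.\<close>

definition state_space :: "(nat \<Rightarrow> nat) \<Rightarrow> nat \<Rightarrow> (nat \<Rightarrow> nat) set" where
  "state_space m n = {x. (\<forall>j<n. x j \<le> m j) \<and> (\<forall>j\<ge>n. x j = 0)}"

abbreviation bool_states :: "nat \<Rightarrow> (nat \<Rightarrow> nat) set" where
  "bool_states n \<equiv> state_space (\<lambda>_. 1) n"

definition async_step :: "(nat \<Rightarrow> nat) \<Rightarrow> nat \<Rightarrow> ((nat \<Rightarrow> nat) \<Rightarrow> nat \<Rightarrow> nat)
    \<Rightarrow> (nat \<Rightarrow> nat) \<Rightarrow> (nat \<Rightarrow> nat) \<Rightarrow> bool" where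
  "async_step m n h x y \<longleftrightarrow> x \<in> state_space m n \<and>
     (\<exists>i<n. x i \<noteq> h x i \<and>
        y = x(i := (if x i < h x i then x i + 1 else x i - 1)))"

abbreviation reach where
  "reach m n h \<equiv> (async_step m n h)\<^sup>*\<^sup>*"

definition is_attractor :: "(nat \<Rightarrow> nat) \<Rightarrow> nat \<Rightarrow> ((nat \<Rightarrow> nat) \<Rightarrow> nat \<Rightarrow> nat)
    \<Rightarrow> (nat \<Rightarrow> nat) set \<Rightarrow> bool" where
  "is_attractor m n h A \<longleftrightarrow> A \<noteq> {} \<and> A \<subseteq> state_space m n \<and>
     (\<forall>x\<in>A. \<forall>y\<in>A. reach m n h x y) \<and>
     (\<forall>x\<in>A. \<forall>y. reach m n h x y \<longrightarrow> y \<in> A)"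

definition attractors :: "(nat \<Rightarrow> nat) \<Rightarrow> nat \<Rightarrow> ((nat \<Rightarrow> nat) \<Rightarrow> nat \<Rightarrow> nat)
    \<Rightarrow> (nat \<Rightarrow> nat) set set" where
  "attractors m n h = {A. is_attractor m n h A}"

definition is_fixed_point :: "(nat \<Rightarrow> nat) \<Rightarrow> nat \<Rightarrow> ((nat \<Rightarrow> nat) \<Rightarrow> nat \<Rightarrow> nat)
    \<Rightarrow> (nat \<Rightarrow> nat) \<Rightarrow> bool" where
  "is_fixed_point m n h x \<longleftrightarrow> x \<in> state_space m n \<and> (\<forall>j<n. h x j = x j)"

text \<open>Boolean DNF: list of clauses; a clause is a list of literals (j, True) = x_j,
  (j, False) = not x_j.\<close>
type_synonym dnf = "(nat \<times> bool) list list"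

definition eval_dnf :: "dnf \<Rightarrow> (nat \<Rightarrow> nat) \<Rightarrow> bool" where
  "eval_dnf D x \<longleftrightarrow> (\<exists>C\<in>set D. \<forall>(j, b)\<in>set C. (x j = 1) = b)"

definition dnf_vars_below :: "nat \<Rightarrow> dnf \<Rightarrow> bool" where
  "dnf_vars_below n D \<longleftrightarrow> (\<forall>C\<in>set D. \<forall>(j, b)\<in>set C. j < n)"

definition dnf_size :: "dnf \<Rightarrow> nat" where
  "dnf_size D = sum_list (map length D)"

definition represents :: "nat \<Rightarrow> dnf \<Rightarrow> ((nat \<Rightarrow> nat) \<Rightarrow> nat) \<Rightarrow> bool" where
  "represents n D g \<longleftrightarrow> dnf_vars_below n D \<and>
     (\<forall>x\<in>bool_states n. (g x = 1) \<longleftrightarrow> eval_dnf D x)"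

definition is_shortest_dnf :: "nat \<Rightarrow> dnf \<Rightarrow> ((nat \<Rightarrow> nat) \<Rightarrow> nat) \<Rightarrow> bool" where
  "is_shortest_dnf n D g \<longleftrightarrow> represents n D g \<and>
     (\<forall>D'. represents n D' g \<longrightarrow> dnf_size D \<le> dnf_size D')"

text \<open>Threshold DNF: literals (j, b, s); (j,True,s) means x_j >= s+1,
  (j,False,s) means x_j < s+1.\<close>
type_synonym thr_dnf = "(nat \<times> bool \<times> nat) list list"

definition underlying_dnf :: "thr_dnf \<Rightarrow> dnf" where
  "underlying_dnf T = map (map (\<lambda>(j, b, s). (j, b))) T"

definition eval_thr :: "thr_dnf \<Rightarrow> (nat \<Rightarrow> nat) \<Rightarrow> bool" where
  "eval_thr T x \<longleftrightarrow> (\<exists>C\<in>set T. \<forall>(j, b, s)\<in>set C. (s + 1 \<le> x j) = b)"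

text \<open>Thresholds admissible: s in {0..m_j-1} (for m_j = 1 this forces s = 0,
  i.e. the literal is unchanged).\<close>
definition thresholds_ok :: "(nat \<Rightarrow> nat) \<Rightarrow> thr_dnf \<Rightarrow> bool" where
  "thresholds_ok m T \<longleftrightarrow> (\<forall>C\<in>set T. \<forall>(j, b, s)\<in>set C. s < m j)"

text \<open>h_j(x) = max(0, min(m_j, x_j + H_j(x))) with H_j = +1 / -1.\<close>
definition thr_map :: "(nat \<Rightarrow> nat) \<Rightarrow> (nat \<Rightarrow> thr_dnf) \<Rightarrow> (nat \<Rightarrow> nat) \<Rightarrow> nat \<Rightarrow> nat" where
  "thr_map m T x j = (if eval_thr (T j) x then min (m j) (x j + 1) else x j - 1)"

definition alpha :: "(nat \<Rightarrow> nat) \<Rightarrow> nat \<Rightarrow> (nat \<Rightarrow> nat) \<Rightarrow> (nat \<Rightarrow> nat) set" where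
  "alpha m n x = {x' \<in> bool_states n. \<forall>j<n. (x j = 0 \<longrightarrow> x' j = 0) \<and> (x j = m j \<longrightarrow> x' j = 1)}"

definition is_refinement :: "(nat \<Rightarrow> nat) \<Rightarrow> nat \<Rightarrow> ((nat \<Rightarrow> nat) \<Rightarrow> nat \<Rightarrow> nat)
    \<Rightarrow> ((nat \<Rightarrow> nat) \<Rightarrow> nat \<Rightarrow> nat) \<Rightarrow> bool" where
  "is_refinement m n h f \<longleftrightarrow> (\<forall>x\<in>state_space m n. \<forall>j<n.
     (h x j < x j \<longrightarrow> (\<exists>x'\<in>alpha m n x. f x' j < x' j)) \<and>
     (h x j > x j \<longrightarrow> (\<exists>x'\<in>alpha m n x. f x' j > x' j)))"

definition self_inhibited :: "dnf \<Rightarrow> nat \<Rightarrow> bool" where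
  "self_inhibited D j \<longleftrightarrow> (\<exists>C\<in>set D. (j, False) \<in> set C)"

definition lift_state :: "(nat \<Rightarrow> nat) \<Rightarrow> (nat \<Rightarrow> nat) \<Rightarrow> nat \<Rightarrow> nat" where
  "lift_state m \<omega> = (\<lambda>j. if \<omega> j = 1 then m j else \<omega> j)"

end

theory Submission
  imports Defs
begin

text \<open>Lifting a Boolean state \<open>\<omega>\<close> to \<open>lift_state m \<omega>\<close> turns every threshold literal into the
  Boolean literal it came from, so \<open>h\<close> pushes coordinate \<open>j\<close> of the lift up iff \<open>f \<omega> j = 1\<close>.
  Without self-inhibition the guard of component \<open>j\<close> is monotone in \<open>x j\<close>, so once \<open>h\<close> starts
  moving \<open>x j\<close> it can carry it all the way to \<open>0\<close> or \<open>m j\<close>. Hence every Boolean transition is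
  simulated by a path between the lifts, and every state reaches a lifted one. Fixed points of \<open>h\<close>
  have all coordinates extreme, so they are exactly the lifts of fixed points of \<open>f\<close>. If all
  attractors of \<open>f\<close> are fixed points, any attractor of \<open>h\<close> contains a lifted state, from which the
  simulated Boolean dynamics reaches a lifted fixed point; so the attractor is that singleton.\<close>

section \<open>Asynchronous dynamics\<close>

lemma finite_state_space: "finite (state_space m n)"
proof (rule finite_subset)
  show "state_space m n \<subseteq>
      {x. \<forall>j. (j \<in> {..<n} \<longrightarrow> x j \<in> {..sum m {..<n}}) \<and> (j \<notin> {..<n} \<longrightarrow> x j = 0)}"
    by (auto simp: state_space_def intro: order_trans[OF _ member_le_sum])
qed (rule finite_set_of_finite_funs; simp)

lemma async_step_state_space:
  assumes bounded: "\<And>x j. x \<in> state_space m n \<Longrightarrow> j < n \<Longrightarrow> g x j \<le> m j"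
    and step: "async_step m n g x y"
  shows "y \<in> state_space m n"
proof -
  from step obtain i where x: "x \<in> state_space m n" and i: "i < n"
    and y: "y = x(i := (if x i < g x i then x i + 1 else x i - 1))"
    unfolding async_step_def by blast
  have "g x i \<le> m i" using bounded x i .
  with x i y show ?thesis by (auto simp: state_space_def)
qed

lemma async_step_unit_move:
  assumes "x \<in> state_space m n" and "i < n" and "g x i = v" and "v = x i + 1 \<or> x i = v + 1"
  shows "async_step m n g x (x(i := v))"
  using assms(4)
proof
  assume "v = x i + 1"
  with assms(1-3) show ?thesis unfolding async_step_def by (intro conjI exI[of _ i]) simp_all
next
  assume "x i = v + 1"
  with assms(1-3) show ?thesis unfolding async_step_def by (intro conjI exI[of _ i]) simp_all
qed

lemma reach_state_space:
  assumes "\<And>x j. x \<in> state_space m n \<Longrightarrow> j < n \<Longrightarrow> g x j \<le> m j"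
    and "reach m n g x y" and "x \<in> state_space m n"
  shows "y \<in> state_space m n"
  using assms(2,3) by (induction rule: rtranclp_induct) (auto intro: async_step_state_space[OF assms(1)])

lemma reach_from_fixed_point:
  assumes "is_fixed_point m n g x" and "reach m n g x y"
  shows "y = x"
  using assms(2) by (induction rule: rtranclp_induct)
    (use assms(1) in \<open>auto simp: async_step_def is_fixed_point_def\<close>)

lemma fixed_point_imp_attractor:
  assumes "is_fixed_point m n g x"
  shows "is_attractor m n g {x}"
  using assms reach_from_fixed_point[OF assms]
  by (auto simp: is_attractor_def is_fixed_point_def)

lemma attractor_singleton_imp_fixed_point:
  assumes att: "is_attractor m n g {x}"
  shows "is_fixed_point m n g x"
proof -
  have x: "x \<in> state_space m n" using att by (simp add: is_attractor_def)
  have "g x j = x j" if j: "j < n" for j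
  proof (rule ccontr)
    assume moves: "g x j \<noteq> x j"
    let ?y = "x(j := (if x j < g x j then x j + 1 else x j - 1))"
    have "async_step m n g x ?y" using x j moves by (auto simp: async_step_def)
    then have "?y = x" using att by (auto simp: is_attractor_def)
    from fun_cong[OF this, of j] moves show False by (auto split: if_splits)
  qed
  with x show ?thesis by (simp add: is_fixed_point_def)
qed

lemma attractor_eq_reachable_fixed_point:
  assumes att: "is_attractor m n g A" and x: "x \<in> A"
    and reach: "reach m n g x y" and fp: "is_fixed_point m n g y"
  shows "A = {y}"
proof -
  have y: "y \<in> A" using att x reach unfolding is_attractor_def by blast
  have "z = y" if "z \<in> A" for z
  proof -
    have "reach m n g y z" using att y that unfolding is_attractor_def by blast
    then show ?thesis by (rule reach_from_fixed_point[OF fp])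
  qed
  with y show ?thesis by blast
qed

text \<open>A state whose forward orbit has minimal size spans a terminal strongly connected component.\<close>
lemma ex_attractor_reachable:
  assumes bounded: "\<And>x j. x \<in> state_space m n \<Longrightarrow> j < n \<Longrightarrow> g x j \<le> m j"
    and x: "x \<in> state_space m n"
  obtains A where "is_attractor m n g A" and "A \<subseteq> {y. reach m n g x y}"
proof -
  let ?R = "\<lambda>y. {z. reach m n g y z}"
  have R_state_space: "?R y \<subseteq> state_space m n" if "y \<in> state_space m n" for y
    using reach_state_space[of m n g, OF bounded _ that] by blast
  obtain y where y: "reach m n g x y"
    and y_min: "\<And>y'. reach m n g x y' \<Longrightarrow> card (?R y) \<le> card (?R y')"
    using ex_has_least_nat[of "reach m n g x" x "\<lambda>y. card (?R y)"] by auto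
  have y_state: "y \<in> state_space m n" using reach_state_space[of m n g, OF bounded y x] .
  have "is_attractor m n g (?R y)"
    unfolding is_attractor_def
  proof (intro conjI ballI allI impI)
    show "?R y \<noteq> {}" by auto
    show "?R y \<subseteq> state_space m n" using R_state_space[OF y_state] .
  next
    fix a b assume a: "a \<in> ?R y" and b: "b \<in> ?R y"
    have "?R a \<subseteq> ?R y" using a by (auto intro: rtranclp_trans)
    moreover have "card (?R y) \<le> card (?R a)" using y_min y a by (auto intro: rtranclp_trans)
    moreover have "finite (?R y)"
      using R_state_space[OF y_state] finite_state_space by (rule finite_subset)
    ultimately have "?R a = ?R y" by (meson card_seteq)
    then show "reach m n g a b" using b by blast
  next
    fix a b assume "a \<in> ?R y" "reach m n g a b"
    then show "b \<in> ?R y" by (auto intro: rtranclp_trans)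
  qed
  moreover have "?R y \<subseteq> ?R x" using y by (auto intro: rtranclp_trans)
  ultimately show ?thesis using that by blast
qed

section \<open>Threshold maps\<close>

lemma eval_thr_raise_coordinate:
  assumes "\<not> self_inhibited (underlying_dnf TT) j"
    and "eval_thr TT x" and "x j \<le> v"
  shows "eval_thr TT (x(j := v))"
proof -
  from assms(2) obtain C where C: "C \<in> set TT" and sat: "\<forall>(k, b, s)\<in>set C. (s + 1 \<le> x k) = b"
    unfolding eval_thr_def by blast
  have positive: "b" if "(j, b, s) \<in> set C" for b s
    using assms(1) C that
    by (force simp: self_inhibited_def underlying_dnf_def)
  have "(s + 1 \<le> (x(j := v)) k) = b" if "(k, b, s) \<in> set C" for k b s
    using sat that positive assms(3) by (cases "k = j") fastforce+
  then show ?thesis using C unfolding eval_thr_def by fastforce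
qed

lemma bool_state_le_1: "\<omega> \<in> bool_states n \<Longrightarrow> \<omega> j \<le> 1"
  by (cases "j < n") (auto simp: state_space_def)

lemma lift_state_fun_upd:
  "lift_state m (\<omega>(j := v)) = (lift_state m \<omega>)(j := if v = 1 then m j else v)"
  by (auto simp: lift_state_def)

lemma eval_thr_lift_state:
  assumes "\<omega> \<in> bool_states n" and "thresholds_ok m TT"
  shows "eval_thr TT (lift_state m \<omega>) \<longleftrightarrow> eval_dnf (underlying_dnf TT) \<omega>"
proof -
  have literal: "(s + 1 \<le> lift_state m \<omega> k) \<longleftrightarrow> \<omega> k = 1" if "s < m k" for s k
    using that bool_state_le_1[OF assms(1), of k] by (auto simp: lift_state_def)
  have clause: "(\<forall>(k, b, s)\<in>set C. (s + 1 \<le> lift_state m \<omega> k) = b) \<longleftrightarrow> (\<forall>(k, b, s)\<in>set C. (\<omega> k = 1) = b)"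
    if "C \<in> set TT" for C
  proof (rule ball_cong[OF refl], clarify)
    fix k b s assume "(k, b, s) \<in> set C"
    with assms(2) that have "s < m k" by (fastforce simp: thresholds_ok_def)
    then show "((s + 1 \<le> lift_state m \<omega> k) = b) = ((\<omega> k = 1) = b)" by (simp only: literal)
  qed
  have "eval_dnf (underlying_dnf TT) \<omega> \<longleftrightarrow> (\<exists>C\<in>set TT. \<forall>(k, b, s)\<in>set C. (\<omega> k = 1) = b)"
    by (simp add: eval_dnf_def underlying_dnf_def split_beta)
  then show ?thesis
    unfolding eval_thr_def using clause by (simp cong: bex_cong)
qed

text \<open>Self-inhibition only matters for \<open>m j > 1\<close>: for \<open>m j = 1\<close> a single step reaches the bound.\<close>
lemma reach_thr_map_raise:
  assumes j: "j < n" and x: "x \<in> state_space m n" and guard: "eval_thr (T j) x"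
    and no_inh: "1 < m j \<longrightarrow> \<not> self_inhibited (underlying_dnf (T j)) j"
  shows "reach m n (thr_map m T) x (x(j := m j))"
proof -
  have "reach m n (thr_map m T) x (x(j := k))" if "x j \<le> k" and "k \<le> m j" for k
    using that
  proof (induction k rule: dec_induct)
    case base
    then show ?case by simp
  next
    case (step k)
    let ?y = "x(j := k)"
    have "eval_thr (T j) ?y"
    proof (cases "k = x j")
      case True
      with guard show ?thesis by simp
    next
      case False
      with step have "1 < m j" by linarith
      with no_inh guard step.hyps(1) show ?thesis by (simp add: eval_thr_raise_coordinate)
    qed
    then have "thr_map m T ?y j = Suc k" using step.prems by (simp add: thr_map_def)
    moreover have "?y \<in> state_space m n" using x j step.prems by (simp add: state_space_def)
    ultimately have "async_step m n (thr_map m T) ?y (?y(j := Suc k))"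
      using j by (intro async_step_unit_move) simp_all
    moreover have "reach m n (thr_map m T) x ?y" using step.IH step.prems Suc_leD by blast
    ultimately have "reach m n (thr_map m T) x (x(j := Suc k))"
      by (simp add: rtranclp.rtrancl_into_rtrancl)
    then show ?case by (simp add: fun_upd_def)
  qed
  with x j show ?thesis by (simp add: state_space_def)
qed

lemma reach_thr_map_lower:
  assumes j: "j < n" and x: "x \<in> state_space m n" and guard: "\<not> eval_thr (T j) x"
    and no_inh: "1 < m j \<longrightarrow> \<not> self_inhibited (underlying_dnf (T j)) j"
  shows "reach m n (thr_map m T) x (x(j := 0))"
proof -
  have x_le: "x j \<le> m j" using x j by (simp add: state_space_def)
  have "reach m n (thr_map m T) x (x(j := k))" if "k \<le> x j" for k
    using that
  proof (induction k rule: inc_induct)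
    case base
    then show ?case by simp
  next
    case (step k)
    let ?y = "x(j := Suc k)"
    have "\<not> eval_thr (T j) ?y"
    proof (cases "Suc k = x j")
      case True
      with guard show ?thesis by simp
    next
      case False
      with step.hyps x_le have "1 < m j" by linarith
      with no_inh guard step.hyps(2) show ?thesis
        using eval_thr_raise_coordinate[of "T j" j ?y "x j"] by auto
    qed
    then have "thr_map m T ?y j = k" by (simp add: thr_map_def)
    moreover have "?y \<in> state_space m n" using x j step.hyps(2) x_le by (auto simp: state_space_def)
    ultimately have "async_step m n (thr_map m T) ?y (?y(j := k))"
      using j by (intro async_step_unit_move) simp_all
    then have "async_step m n (thr_map m T) ?y (x(j := k))" by simp
    moreover have "reach m n (thr_map m T) x ?y" using step.IH by (simp add: fun_upd_def)
    ultimately have "reach m n (thr_map m T) x (x(j := k))"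
      by (simp add: rtranclp.rtrancl_into_rtrancl)
    then show ?case by (simp add: fun_upd_def)
  qed
  then show ?thesis by simp
qed

lemma reach_thr_map_extreme:
  assumes x: "x \<in> state_space m n"
    and no_inh: "\<forall>j<n. 1 < m j \<longrightarrow> \<not> self_inhibited (underlying_dnf (T j)) j"
  obtains y where "y \<in> state_space m n" "reach m n (thr_map m T) x y" "\<forall>j<n. y j = 0 \<or> y j = m j"
proof -
  have "\<exists>y\<in>state_space m n. reach m n (thr_map m T) x y \<and> (\<forall>j<p. y j = 0 \<or> y j = m j)"
    if "p \<le> n" for p
    using that
  proof (induction p)
    case 0
    then show ?case using x by blast
  next
    case (Suc p)
    then obtain y where y: "y \<in> state_space m n" "reach m n (thr_map m T) x y"
      and extreme: "\<forall>j<p. y j = 0 \<or> y j = m j" by auto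
    have p: "p < n" using Suc.prems by simp
    obtain v where v: "v = 0 \<or> v = m p" and "reach m n (thr_map m T) y (y(p := v))"
      using reach_thr_map_raise[OF p y(1)] reach_thr_map_lower[OF p y(1)] no_inh p by blast
    moreover have "y(p := v) \<in> state_space m n" using y(1) p v by (auto simp: state_space_def)
    moreover have "\<forall>j<Suc p. (y(p := v)) j = 0 \<or> (y(p := v)) j = m j"
      using extreme v by (simp add: less_Suc_eq)
    ultimately show ?case using y(2) by (meson rtranclp_trans)
  qed
  from this[of n] that show ?thesis by blast
qed

lemma extreme_state_eq_lift_state:
  assumes "y \<in> state_space m n" and "\<forall>j<n. y j = 0 \<or> y j = m j" and "\<forall>j<n. 1 \<le> m j"
  obtains \<omega> where "\<omega> \<in> bool_states n" and "y = lift_state m \<omega>"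
proof
  let ?\<omega> = "\<lambda>k. if y k = 0 then 0 else 1 :: nat"
  show "?\<omega> \<in> bool_states n" using assms(1) by (auto simp: state_space_def)
  show "y = lift_state m ?\<omega>"
  proof
    fix k show "y k = lift_state m ?\<omega> k"
      using assms by (cases "k < n") (auto simp: lift_state_def state_space_def)
  qed
qed

section \<open>Lifting the Boolean dynamics\<close>

locale threshold_model =
  fixes n :: nat and m :: "nat \<Rightarrow> nat" and f :: "(nat \<Rightarrow> nat) \<Rightarrow> nat \<Rightarrow> nat"
    and T :: "nat \<Rightarrow> thr_dnf"
  assumes m_pos: "\<And>j. j < n \<Longrightarrow> 1 \<le> m j"
    and f_bool: "\<And>\<omega> j. \<omega> \<in> bool_states n \<Longrightarrow> j < n \<Longrightarrow> f \<omega> j \<le> 1"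
    and guard_lift_state:
      "\<And>\<omega> j. \<omega> \<in> bool_states n \<Longrightarrow> j < n \<Longrightarrow> eval_thr (T j) (lift_state m \<omega>) \<longleftrightarrow> f \<omega> j = 1"
    and not_self_inhibited: "\<forall>j<n. 1 < m j \<longrightarrow> \<not> self_inhibited (underlying_dnf (T j)) j"
begin

lemma lift_state_in_state_space: "\<omega> \<in> bool_states n \<Longrightarrow> lift_state m \<omega> \<in> state_space m n"
  using m_pos by (auto simp: state_space_def lift_state_def)

lemma fixed_point_lift_state_iff:
  assumes \<omega>: "\<omega> \<in> bool_states n"
  shows "is_fixed_point m n (thr_map m T) (lift_state m \<omega>) \<longleftrightarrow> is_fixed_point (\<lambda>_. 1) n f \<omega>"
proof -
  have "thr_map m T (lift_state m \<omega>) j = lift_state m \<omega> j \<longleftrightarrow> f \<omega> j = \<omega> j" if j: "j < n" for j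
    using guard_lift_state[OF \<omega> j] f_bool[OF \<omega> j] bool_state_le_1[OF \<omega>, of j] m_pos[OF j]
    by (cases "\<omega> j = 1") (auto simp: thr_map_def lift_state_def)
  then show ?thesis using \<omega> lift_state_in_state_space by (simp add: is_fixed_point_def)
qed

lemma fixed_point_thr_map_is_lift_state:
  assumes fp: "is_fixed_point m n (thr_map m T) x"
  obtains \<omega> where "\<omega> \<in> bool_states n" and "x = lift_state m \<omega>"
proof (rule extreme_state_eq_lift_state)
  show "x \<in> state_space m n" using fp by (simp add: is_fixed_point_def)
  show "\<forall>j<n. x j = 0 \<or> x j = m j"
    using fp by (auto simp: is_fixed_point_def thr_map_def split: if_splits)
qed (use m_pos that in auto)

lemma fixed_point_thr_map_iff:
  "is_fixed_point m n (thr_map m T) x \<longleftrightarrow> (\<exists>\<omega>. is_fixed_point (\<lambda>_. 1) n f \<omega> \<and> x = lift_state m \<omega>)"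
proof
  assume fp: "is_fixed_point m n (thr_map m T) x"
  then obtain \<omega> where "\<omega> \<in> bool_states n" and "x = lift_state m \<omega>"
    by (rule fixed_point_thr_map_is_lift_state)
  with fp fixed_point_lift_state_iff show "\<exists>\<omega>. is_fixed_point (\<lambda>_. 1) n f \<omega> \<and> x = lift_state m \<omega>"
    by blast
next
  assume "\<exists>\<omega>. is_fixed_point (\<lambda>_. 1) n f \<omega> \<and> x = lift_state m \<omega>"
  then show "is_fixed_point m n (thr_map m T) x"
    using fixed_point_lift_state_iff by (auto simp: is_fixed_point_def)
qed

lemma reach_lift_state:
  assumes "reach (\<lambda>_. 1) n f a b"
  shows "reach m n (thr_map m T) (lift_state m a) (lift_state m b)"
  using assms
proof (induction rule: rtranclp_induct)
  case base
  then show ?case by simp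
next
  case (step b c)
  from step.hyps(2) obtain i where b: "b \<in> bool_states n" and i: "i < n" and moves: "b i \<noteq> f b i"
    and c: "c = b(i := (if b i < f b i then b i + 1 else b i - 1))"
    unfolding async_step_def by blast
  have no_inh: "1 < m i \<longrightarrow> \<not> self_inhibited (underlying_dnf (T i)) i"
    using not_self_inhibited i by blast
  have "reach m n (thr_map m T) (lift_state m b) (lift_state m c)"
  proof (cases "f b i = 1")
    case True
    then have "c = b(i := 1)" using c moves bool_state_le_1[OF b, of i] by auto
    moreover have "eval_thr (T i) (lift_state m b)" using True guard_lift_state[OF b i] by simp
    from reach_thr_map_raise[where T = T, OF i lift_state_in_state_space[OF b] this no_inh]
    show ?thesis by (simp add: \<open>c = b(i := 1)\<close> lift_state_fun_upd)
  next
    case False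
    then have "c = b(i := 0)" using c moves bool_state_le_1[OF b, of i] f_bool[OF b i] by auto
    moreover have "\<not> eval_thr (T i) (lift_state m b)" using False guard_lift_state[OF b i] by simp
    from reach_thr_map_lower[where T = T, OF i lift_state_in_state_space[OF b] this no_inh]
    show ?thesis by (simp add: \<open>c = b(i := 0)\<close> lift_state_fun_upd)
  qed
  with step.IH show ?case by (rule rtranclp_trans)
qed

lemma reach_lift_state_from:
  assumes "x \<in> state_space m n"
  obtains \<omega> where "\<omega> \<in> bool_states n" and "reach m n (thr_map m T) x (lift_state m \<omega>)"
proof -
  obtain y where "y \<in> state_space m n" "reach m n (thr_map m T) x y" "\<forall>j<n. y j = 0 \<or> y j = m j"
    using reach_thr_map_extreme[OF assms not_self_inhibited] .
  with m_pos that show ?thesis by (metis extreme_state_eq_lift_state)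
qed

lemma attractors_lift_state:
  assumes att_f: "attractors (\<lambda>_. 1) n f = (\<lambda>\<omega>. {\<omega>}) ` W"
  shows "attractors m n (thr_map m T) = (\<lambda>\<omega>. {lift_state m \<omega>}) ` W"
proof
  have W_fixed: "is_fixed_point m n (thr_map m T) (lift_state m w)" if "w \<in> W" for w
  proof -
    have "is_fixed_point (\<lambda>_. 1) n f w"
      using att_f that by (auto simp: attractors_def intro: attractor_singleton_imp_fixed_point)
    then show ?thesis
      using fixed_point_lift_state_iff by (auto simp: is_fixed_point_def)
  qed
  then show "(\<lambda>\<omega>. {lift_state m \<omega>}) ` W \<subseteq> attractors m n (thr_map m T)"
    by (auto simp: attractors_def intro: fixed_point_imp_attractor)
  show "attractors m n (thr_map m T) \<subseteq> (\<lambda>\<omega>. {lift_state m \<omega>}) ` W"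
  proof
    fix A assume "A \<in> attractors m n (thr_map m T)"
    then have A: "is_attractor m n (thr_map m T) A" by (simp add: attractors_def)
    then obtain x where x: "x \<in> A" and "x \<in> state_space m n" by (auto simp: is_attractor_def)
    then obtain \<omega> where \<omega>: "\<omega> \<in> bool_states n" and x_\<omega>: "reach m n (thr_map m T) x (lift_state m \<omega>)"
      using reach_lift_state_from by blast
    obtain B where "is_attractor (\<lambda>_. 1) n f B" and B_reach: "B \<subseteq> {v. reach (\<lambda>_. 1) n f \<omega> v}"
      using ex_attractor_reachable[of "\<lambda>_. 1" n f, OF f_bool \<omega>] by blast
    then have "B \<in> attractors (\<lambda>_. 1) n f" by (simp add: attractors_def)
    then obtain w where w: "w \<in> W" and "B = {w}" using att_f by blast
    with B_reach have "reach m n (thr_map m T) (lift_state m \<omega>) (lift_state m w)"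
      by (simp add: reach_lift_state)
    with x_\<omega> have "reach m n (thr_map m T) x (lift_state m w)" by (rule rtranclp_trans)
    from A x this W_fixed[OF w] have "A = {lift_state m w}" by (rule attractor_eq_reachable_fixed_point)
    with w show "A \<in> (\<lambda>\<omega>. {lift_state m \<omega>}) ` W" by blast
  qed
qed

end

theorem proposition2:
  fixes n :: nat and m :: "nat \<Rightarrow> nat"
    and f :: "(nat \<Rightarrow> nat) \<Rightarrow> nat \<Rightarrow> nat"
    and T :: "nat \<Rightarrow> thr_dnf"
    and h :: "(nat \<Rightarrow> nat) \<Rightarrow> nat \<Rightarrow> nat"
  assumes n_pos: "n \<ge> 1"
    and m_pos: "\<forall>j<n. m j \<ge> 1"
    and f_bool: "\<forall>x\<in>bool_states n. \<forall>j<n. f x j \<le> 1"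
    and shortest: "\<forall>j<n. is_shortest_dnf n (underlying_dnf (T j)) (\<lambda>x. f x j)"
    and thr: "\<forall>j<n. thresholds_ok m (T j)"
    and h_def: "h = thr_map m T"
    and refines: "is_refinement m n h f"
    and no_self_inh: "\<forall>j<n. 1 < m j \<longrightarrow> \<not> self_inhibited (underlying_dnf (T j)) j"
  shows "(\<forall>\<omega>. is_fixed_point (\<lambda>_. 1) n f \<omega> \<longrightarrow> is_fixed_point m n h (lift_state m \<omega>))
       \<and> (\<forall>x. is_fixed_point m n h x \<longrightarrow>
              (\<exists>\<omega>. is_fixed_point (\<lambda>_. 1) n f \<omega> \<and> x = lift_state m \<omega>))
       \<and> (\<forall>W. attractors (\<lambda>_. 1) n f = (\<lambda>\<omega>. {\<omega>}) ` W \<longrightarrow>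
              attractors m n h = (\<lambda>\<omega>. {lift_state m \<omega>}) ` W)"
proof -
  have guard: "eval_thr (T j) (lift_state m \<omega>) \<longleftrightarrow> f \<omega> j = 1"
    if "\<omega> \<in> bool_states n" and "j < n" for \<omega> j
    using eval_thr_lift_state[OF that(1)] thr shortest that
    by (auto simp: is_shortest_dnf_def represents_def)
  interpret threshold_model n m f T
  proof
    show "\<And>j. j < n \<Longrightarrow> 1 \<le> m j" using m_pos by blast
    show "\<And>\<omega> j. \<omega> \<in> bool_states n \<Longrightarrow> j < n \<Longrightarrow> f \<omega> j \<le> 1" using f_bool by blast
  qed (use guard no_self_inh in auto)
  show ?thesis
    unfolding h_def using fixed_point_thr_map_iff attractors_lift_state by blast
qed

end
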